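(* Let $\Psi$ be a root system in a real inner product space, with base $\{\gamma_1,\dots,\gamma_m\}$ and positive roots $\Psi^+$, and let $\mathfrak{s}^+=\{H\in\operatorname{span}\Psi:(H,\gamma_i)>0\text{ for all } i\}$. Let $\Psi_1=\operatorname{span}_{\mathbb{Z}}\{\gamma_2,\dots,\gamma_m\}\cap\Psi$ with positive roots $\Psi_1^+=\Psi_1\cap\Psi^+$, and let $R_1=\{H\in\mathfrak{s}^+:\|H\|\ge1,\ (\gamma_1,H)\ge(\gamma_j,H)\text{ for all } j\}$. Then there exists $C>0$ such that for all $\alpha\in\Psi^+\setminus\Psi_1^+$ and all $H\in R_1$, $$(H,\alpha)\ge C\|H\|.$$
   Context: In the paper $\Psi$ arises as a simple subroot system of an irreducible root system $\Phi$ with base $\Delta$, i.e. $\Psi=\operatorname{span}_{\mathbb{Z}}\{\gamma_1,\dots,\gamma_m\}\cap\Phi$ for some subset $\{\gamma_1,\dots,\gamma_m\}\subseteq\Delta$. *)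

theory Defs
  imports "HOL-Analysis.Analysis"
begin

text \<open>A (finite, reduced, crystallographic) root system in a real inner product
  space, in the sense of Humphreys; it is a root system in its own span.\<close>
definition root_system :: "'a::real_inner set \<Rightarrow> bool" where
  "root_system \<Psi> \<longleftrightarrow>
     finite \<Psi> \<and> 0 \<notin> \<Psi> \<and>
     (\<forall>\<alpha>\<in>\<Psi>. \<forall>\<beta>\<in>\<Psi>. 2 * (\<beta> \<bullet> \<alpha>) / (\<alpha> \<bullet> \<alpha>) \<in> \<int> \<and>
                     \<beta> - (2 * (\<beta> \<bullet> \<alpha>) / (\<alpha> \<bullet> \<alpha>)) *\<^sub>R \<alpha> \<in> \<Psi>) \<and>
     (\<forall>\<alpha>\<in>\<Psi>. \<forall>c::real. c *\<^sub>R \<alpha> \<in> \<Psi> \<longrightarrow> c = 1 \<or> c = -1)"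

definition int_span :: "'a::real_vector set \<Rightarrow> 'a set" where
  "int_span S = {(\<Sum>b\<in>F. of_int (c b) *\<^sub>R b) | F c. finite F \<and> F \<subseteq> S}"

definition is_base :: "'a::real_inner set \<Rightarrow> 'a set \<Rightarrow> bool" where
  "is_base \<Psi> B \<longleftrightarrow> B \<subseteq> \<Psi> \<and> independent B \<and>
     (\<forall>\<alpha>\<in>\<Psi>. \<exists>c::'a \<Rightarrow> int. \<alpha> = (\<Sum>b\<in>B. of_int (c b) *\<^sub>R b) \<and>
                 ((\<forall>b\<in>B. c b \<ge> 0) \<or> (\<forall>b\<in>B. c b \<le> 0)))"

definition positive_roots :: "'a::real_inner set \<Rightarrow> 'a set \<Rightarrow> 'a set" where
  "positive_roots \<Psi> B = {\<alpha>\<in>\<Psi>. \<exists>c::'a \<Rightarrow> int. \<alpha> = (\<Sum>b\<in>B. of_int (c b) *\<^sub>R b) \<and>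
                                   (\<forall>b\<in>B. c b \<ge> 0)}"

end

theory Submission imports Defs begin

text \<open>For \<open>H \<in> R1\<close> all the pairings \<open>\<gamma>\<^sub>j \<bullet> H\<close> lie in \<open>(0, \<gamma>\<^sub>1 \<bullet> H]\<close>, and on the finite-dimensional
  space spanned by the base the norm is dominated by the largest such pairing, so
  \<open>\<gamma>\<^sub>1 \<bullet> H \<ge> \<parallel>H\<parallel> / K\<close>. A positive root outside \<open>\<Psi>\<^sub>1\<close> has a coefficient \<open>\<ge> 1\<close> at \<open>\<gamma>\<^sub>1\<close> and
  nonnegative coefficients elsewhere, hence \<open>H \<bullet> \<alpha> \<ge> \<gamma>\<^sub>1 \<bullet> H\<close>.\<close>

lemma Gram_Schmidt_step_finite:
  fixes S :: "'a::real_inner set"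
  assumes "finite S" and S: "pairwise orthogonal S" and x: "x \<in> span S"
  shows "orthogonal x (a - (\<Sum>b\<in>S. (b \<bullet> a / (b \<bullet> b)) *\<^sub>R b))"
proof -
  have "orthogonal (a - (\<Sum>b\<in>S. (b \<bullet> a / (b \<bullet> b)) *\<^sub>R b)) y" if "y \<in> S" for y
  proof -
    have "a \<bullet> y = (\<Sum>b\<in>S. if b = y then b \<bullet> a else 0)"
      by (simp add: \<open>finite S\<close> inner_commute that)
    also have "\<dots> = (\<Sum>b\<in>S. b \<bullet> a * (b \<bullet> y) / (b \<bullet> b))"
      by (rule sum.cong [OF refl]) (use S that in \<open>auto simp: pairwise_def orthogonal_def\<close>)
    finally show ?thesis
      by (simp add: orthogonal_def algebra_simps inner_sum_left)
  qed
  then show ?thesis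
    using orthogonal_to_span orthogonal_commute x by blast
qed

lemma orthogonal_extension_finite:
  fixes S :: "'a::real_inner set"
  assumes "finite T" "finite S" "pairwise orthogonal S"
  shows "\<exists>U. finite U \<and> pairwise orthogonal (S \<union> U) \<and> span (S \<union> U) = span (S \<union> T)"
  using assms
proof (induction arbitrary: S)
  case empty
  then show ?case
    by (intro exI[of _ "{}"]) simp
next
  case (insert a T)
  define a' where "a' = a - (\<Sum>b\<in>S. (b \<bullet> a / (b \<bullet> b)) *\<^sub>R b)"
  obtain U where "finite U" and orthU: "pairwise orthogonal (S \<union> insert a' U)"
    and spanU: "span (insert a' S \<union> U) = span (insert a' S \<union> T)"
    using insert.IH [of "insert a' S"]
    by (auto simp: Gram_Schmidt_step_finite a'_def insert.prems orthogonal_commute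
        pairwise_orthogonal_insert span_clauses)
  have "span (S \<union> insert a' U) = span (insert a' (S \<union> T))"
    using spanU by simp
  also have "\<dots> = span (insert a (S \<union> T))"
    by (simp add: a'_def span_neg span_sum span_base span_mul eq_span_insert_eq)
  finally show ?case
    using orthU \<open>finite U\<close> by (intro exI[of _ "insert a' U"]) auto
qed

lemma orthogonal_basis_of_finite_span:
  fixes T :: "'a::real_inner set"
  assumes "finite T"
  obtains U where "finite U" "0 \<notin> U" "pairwise orthogonal U" "span U = span T"
proof -
  obtain U where "finite U" "pairwise orthogonal U" "span U = span T"
    using orthogonal_extension_finite [OF assms, of "{}"] by auto
  then show ?thesis
    by (intro that [of "U - {0}"]) (auto simp: pairwise_def)
qed

lemma span_orthogonal_expansion:
  fixes V :: "'a::real_inner set"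
  assumes "finite V" "pairwise orthogonal V" and x: "x \<in> span V"
  shows "x = (\<Sum>v\<in>V. (v \<bullet> x / (v \<bullet> v)) *\<^sub>R v)"
proof -
  define y where "y = x - (\<Sum>v\<in>V. (v \<bullet> x / (v \<bullet> v)) *\<^sub>R v)"
  have "y \<in> span V"
    unfolding y_def by (intro span_diff x span_sum span_mul span_base)
  then have "orthogonal y y"
    using Gram_Schmidt_step_finite [OF assms(1,2), of y x] by (simp add: y_def)
  then show ?thesis
    by (simp add: orthogonal_def y_def)
qed

text \<open>Each vector of an orthogonal basis is a fixed combination of \<open>B\<close>, so its pairing with
  \<open>x\<close> is controlled by the pairings \<open>b \<bullet> x\<close>; the expansion in that basis does the rest.\<close>
lemma norm_bounded_by_inner_on_span:
  fixes B :: "'a::real_inner set"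
  assumes "finite B"
  obtains K where "K \<ge> 0"
    "\<And>x M. x \<in> span B \<Longrightarrow> (\<And>b. b \<in> B \<Longrightarrow> \<bar>b \<bullet> x\<bar> \<le> M) \<Longrightarrow> norm x \<le> K * M"
proof -
  obtain V where "finite V" "0 \<notin> V" "pairwise orthogonal V" and spanV: "span V = span B"
    using orthogonal_basis_of_finite_span [OF assms] by blast
  have "\<forall>v\<in>V. \<exists>d. v = (\<Sum>b\<in>B. d b *\<^sub>R b)"
    using spanV span_base span_finite [OF assms] by blast
  then obtain d where d: "\<And>v. v \<in> V \<Longrightarrow> v = (\<Sum>b\<in>B. d v b *\<^sub>R b)"
    by metis
  define K where "K = (\<Sum>v\<in>V. (\<Sum>b\<in>B. \<bar>d v b\<bar>) / norm v)"
  have "K \<ge> 0"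
    unfolding K_def by (intro sum_nonneg divide_nonneg_nonneg) auto
  moreover have "norm x \<le> K * M"
    if x: "x \<in> span B" and M: "\<And>b. b \<in> B \<Longrightarrow> \<bar>b \<bullet> x\<bar> \<le> M" for x M
  proof -
    have coeff: "norm ((v \<bullet> x / (v \<bullet> v)) *\<^sub>R v) \<le> (\<Sum>b\<in>B. \<bar>d v b\<bar>) / norm v * M"
      if v: "v \<in> V" for v
    proof -
      have "\<bar>v \<bullet> x\<bar> = \<bar>\<Sum>b\<in>B. d v b * (b \<bullet> x)\<bar>"
        by (subst d [OF v]) (simp add: inner_sum_left)
      also have "\<dots> \<le> (\<Sum>b\<in>B. \<bar>d v b\<bar> * M)"
        by (rule order_trans [OF sum_abs sum_mono]) (simp add: abs_mult M mult_left_mono)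
      finally have "\<bar>v \<bullet> x\<bar> \<le> (\<Sum>b\<in>B. \<bar>d v b\<bar>) * M"
        by (simp add: sum_distrib_right)
      moreover have "v \<noteq> 0"
        using v \<open>0 \<notin> V\<close> by auto
      ultimately show ?thesis
        by (simp add: power2_norm_eq_inner [symmetric] power2_eq_square divide_right_mono)
    qed
    have "norm x \<le> (\<Sum>v\<in>V. norm ((v \<bullet> x / (v \<bullet> v)) *\<^sub>R v))"
      using span_orthogonal_expansion [OF \<open>finite V\<close> \<open>pairwise orthogonal V\<close>, of x] x spanV
      by (metis norm_sum)
    also have "\<dots> \<le> K * M"
      unfolding K_def using coeff by (simp add: sum_mono sum_distrib_right)
    finally show ?thesis .
  qed
  ultimately show ?thesis
    using that by blast
qed

lemma inner_nonneg_combination_ge: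
  fixes B :: "'a::real_inner set"
  assumes "finite B" "a \<in> B"
    and H: "\<And>b. b \<in> B \<Longrightarrow> H \<bullet> b \<ge> 0" and c: "\<And>b. b \<in> B \<Longrightarrow> c b \<ge> 0"
  shows "c a * (H \<bullet> a) \<le> H \<bullet> (\<Sum>b\<in>B. c b *\<^sub>R b)"
proof -
  have "c a * (H \<bullet> a) \<le> (\<Sum>b\<in>B. c b * (H \<bullet> b))"
    using assms by (intro member_le_sum mult_nonneg_nonneg) auto
  then show ?thesis
    by (simp add: inner_sum_right)
qed

lemma positive_root_leading_coeff:
  assumes "\<alpha> \<in> positive_roots \<Psi> (insert a B)" "\<alpha> \<notin> int_span B" "a \<notin> B" "finite B"
  obtains c :: "'a::real_inner \<Rightarrow> int"
  where "\<alpha> = (\<Sum>b\<in>insert a B. of_int (c b) *\<^sub>R b)" "\<And>b. b \<in> insert a B \<Longrightarrow> c b \<ge> 0" "c a \<ge> 1"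
proof -
  obtain c :: "'a \<Rightarrow> int" where \<alpha>: "\<alpha> = (\<Sum>b\<in>insert a B. of_int (c b) *\<^sub>R b)"
    and c: "\<forall>b\<in>insert a B. c b \<ge> 0"
    using assms(1) by (auto simp: positive_roots_def)
  have "c a \<noteq> 0"
  proof
    assume "c a = 0"
    then have "\<alpha> = (\<Sum>b\<in>B. of_int (c b) *\<^sub>R b)"
      using \<alpha> assms(3,4) by simp
    then have "\<alpha> \<in> int_span B"
      using \<open>finite B\<close> by (auto simp: int_span_def)
    with assms(2) show False ..
  qed
  with c have "c a \<ge> 1"
    by force
  with \<alpha> c show ?thesis
    by (intro that) auto
qed

lemma base_spans_roots:
  assumes "is_base \<Psi> B"
  shows "span \<Psi> \<subseteq> span B"
proof -
  have "\<alpha> \<in> span B" if \<alpha>: "\<alpha> \<in> \<Psi>" for \<alpha>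
  proof -
    have "\<forall>\<alpha>\<in>\<Psi>. \<exists>c::'a \<Rightarrow> int. \<alpha> = (\<Sum>b\<in>B. of_int (c b) *\<^sub>R b) \<and>
            ((\<forall>b\<in>B. c b \<ge> 0) \<or> (\<forall>b\<in>B. c b \<le> 0))"
      using assms unfolding is_base_def by (elim conjE)
    then obtain c :: "'a \<Rightarrow> int" where "\<alpha> = (\<Sum>b\<in>B. of_int (c b) *\<^sub>R b)"
      using \<alpha> by blast
    then show ?thesis
      by (simp add: span_sum span_scale span_base)
  qed
  then show ?thesis
    by (simp add: span_minimal subsetI)
qed

lemma positive_root_pairing_lower_bound:
  fixes B :: "'a::real_inner set"
  assumes "is_base \<Psi> (insert a B)" "a \<notin> B" "finite B"
  obtains C where "C > 0"
    "\<And>\<alpha> H. \<alpha> \<in> positive_roots \<Psi> (insert a B) \<Longrightarrow> \<alpha> \<notin> int_span B \<Longrightarrow> H \<in> span \<Psi> \<Longrightarrow>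
       (\<And>b. b \<in> insert a B \<Longrightarrow> 0 < H \<bullet> b \<and> H \<bullet> b \<le> H \<bullet> a) \<Longrightarrow> C * norm H \<le> H \<bullet> \<alpha>"
proof -
  obtain K where "K \<ge> 0" and K: "\<And>x M. x \<in> span (insert a B) \<Longrightarrow>
      (\<And>b. b \<in> insert a B \<Longrightarrow> \<bar>b \<bullet> x\<bar> \<le> M) \<Longrightarrow> norm x \<le> K * M"
    using norm_bounded_by_inner_on_span [of "insert a B"] \<open>finite B\<close> by blast
  have "norm H / (K + 1) \<le> H \<bullet> \<alpha>"
    if \<alpha>: "\<alpha> \<in> positive_roots \<Psi> (insert a B)" "\<alpha> \<notin> int_span B" and "H \<in> span \<Psi>"
      and H: "\<And>b. b \<in> insert a B \<Longrightarrow> 0 < H \<bullet> b \<and> H \<bullet> b \<le> H \<bullet> a" for \<alpha> H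
  proof -
    have "H \<in> span (insert a B)"
      using \<open>H \<in> span \<Psi>\<close> base_spans_roots [OF assms(1)] by blast
    then have "norm H \<le> K * (H \<bullet> a)"
      by (rule K) (use H in \<open>force simp: inner_commute\<close>)
    then have norm_le: "norm H / (K + 1) \<le> H \<bullet> a"
      using \<open>K \<ge> 0\<close> H [of a] by (simp add: divide_le_eq algebra_simps)
    obtain c :: "'a \<Rightarrow> int"
      where \<alpha>_eq: "\<alpha> = (\<Sum>b\<in>insert a B. of_int (c b) *\<^sub>R b)"
        and c: "\<And>b. b \<in> insert a B \<Longrightarrow> c b \<ge> 0" and "c a \<ge> 1"
      using positive_root_leading_coeff \<alpha> \<open>a \<notin> B\<close> \<open>finite B\<close> by blast
    have "H \<bullet> a \<le> of_int (c a) * (H \<bullet> a)"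
      using \<open>c a \<ge> 1\<close> H [of a] by simp
    also have "\<dots> \<le> H \<bullet> \<alpha>"
      unfolding \<alpha>_eq using \<open>finite B\<close> H c
      by (intro inner_nonneg_combination_ge) (auto intro: less_imp_le)
    finally show ?thesis
      using norm_le by linarith
  qed
  then show ?thesis
    using \<open>K \<ge> 0\<close> by (intro that [of "1 / (K + 1)"]) auto
qed

theorem lemma2:
  fixes \<Psi> :: "'a::real_inner set" and \<gamma> :: "nat \<Rightarrow> 'a" and m :: nat
  assumes "root_system \<Psi>"
    and "m \<ge> 1"
    and "inj_on \<gamma> {1..m}"
    and "is_base \<Psi> (\<gamma> ` {1..m})"
  defines "splus \<equiv> {H \<in> span \<Psi>. \<forall>i\<in>{1..m}. H \<bullet> \<gamma> i > 0}"
    and "\<Psi>1 \<equiv> int_span (\<gamma> ` {2..m}) \<inter> \<Psi>"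
  defines "\<Psi>1plus \<equiv> \<Psi>1 \<inter> positive_roots \<Psi> (\<gamma> ` {1..m})"
    and "R1 \<equiv> {H \<in> splus. norm H \<ge> 1 \<and> (\<forall>j\<in>{1..m}. \<gamma> 1 \<bullet> H \<ge> \<gamma> j \<bullet> H)}"
  shows "\<exists>C>0. \<forall>\<alpha> \<in> positive_roots \<Psi> (\<gamma> ` {1..m}) - \<Psi>1plus.
           \<forall>H \<in> R1. H \<bullet> \<alpha> \<ge> C * norm H"
proof -
  define B where "B = \<gamma> ` {2..m}"
  have "{1..m} = insert 1 {2..m}"
    using assms(2) by auto
  then have base: "\<gamma> ` {1..m} = insert (\<gamma> 1) B"
    by (simp add: B_def)
  have "\<gamma> 1 \<notin> B"
    using inj_on_image_mem_iff [OF assms(3), of 1 "{2..m}"] assms(2) by (simp add: B_def)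
  obtain C where "C > 0" and C: "\<And>\<alpha> H. \<alpha> \<in> positive_roots \<Psi> (insert (\<gamma> 1) B) \<Longrightarrow>
      \<alpha> \<notin> int_span B \<Longrightarrow> H \<in> span \<Psi> \<Longrightarrow>
      (\<And>b. b \<in> insert (\<gamma> 1) B \<Longrightarrow> 0 < H \<bullet> b \<and> H \<bullet> b \<le> H \<bullet> \<gamma> 1) \<Longrightarrow> C * norm H \<le> H \<bullet> \<alpha>"
    using positive_root_pairing_lower_bound [of \<Psi> "\<gamma> 1" B] assms(4) \<open>\<gamma> 1 \<notin> B\<close>
    unfolding base by (auto simp: B_def)
  have "C * norm H \<le> H \<bullet> \<alpha>"
    if \<alpha>: "\<alpha> \<in> positive_roots \<Psi> (\<gamma> ` {1..m}) - \<Psi>1plus" and H: "H \<in> R1" for \<alpha> H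
  proof (rule C)
    show "\<alpha> \<in> positive_roots \<Psi> (insert (\<gamma> 1) B)" "\<alpha> \<notin> int_span B"
      using \<alpha> unfolding base \<Psi>1plus_def \<Psi>1_def B_def positive_roots_def by blast+
    have "\<forall>i\<in>{1..m}. 0 < H \<bullet> \<gamma> i \<and> \<gamma> i \<bullet> H \<le> \<gamma> 1 \<bullet> H"
      using H by (simp add: R1_def splus_def)
    then show "\<And>b. b \<in> insert (\<gamma> 1) B \<Longrightarrow> 0 < H \<bullet> b \<and> H \<bullet> b \<le> H \<bullet> \<gamma> 1"
      unfolding base [symmetric] by (auto simp: inner_commute)
  qed (use H in \<open>simp add: R1_def splus_def\<close>)
  with \<open>C > 0\<close> show ?thesis
    by blast
qed

end
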